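(* Let $u=\sum_{j=1}^nF_j\otimes h^{(j)}\in\mathcal{S}_{\mathfrak{h},\delta}$. Then for all $f,g\in\mathfrak{h}_\mathbb{C}$, \[\langle\mathcal{E}(f),\delta(u)\mathcal{E}(g)\rangle=\Big\langle\mathcal{E}(f)\otimes\begin{pmatrix}if-i\overline g\\ f+\overline g\end{pmatrix},\,u\,\mathcal{E}(g)\Big\rangle,\] where $u\mathcal{E}(g)=\sum_jF_j\mathcal{E}(g)\otimes h^{(j)}\in\mathfrak{H}\otimes\mathfrak{h}_\mathbb{C}\otimes\mathbb{C}^2$; explicitly the right-hand side equals $\sum_j\big(\langle if-i\overline g,h^{(j)}_1\rangle+\langle f+\overline g,h^{(j)}_2\rangle\big)\langle\mathcal{E}(f),F_j\mathcal{E}(g)\rangle$.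
   Context: $\mathfrak{h}$ is a real separable Hilbert space, $\mathfrak{h}_\mathbb{C}$ its complexification (inner products antilinear in the first argument), with conjugation $\overline{h_1+ih_2}=h_1-ih_2$; elements of $\mathfrak{h}\otimes\mathbb{R}^2$ (resp. $\mathfrak{h}_\mathbb{C}\otimes\mathbb{C}^2$) are pairs of elements of $\mathfrak{h}$ (resp. $\mathfrak{h}_\mathbb{C}$). $\mathfrak{H}=\Gamma_s(\mathfrak{h}_\mathbb{C})$ is the symmetric Fock space with exponential vectors $\mathcal{E}(k)=\sum_nk^{\otimes n}/\sqrt{n!}$. $a(h),a^+(h)$ are annihilation/creation operators ($a(h)\mathcal{E}(g)=\langle h,g\rangle\mathcal{E}(g)$, $a^+(h)=a(h)^*$), $Q(h)=a(\overline h)+a^+(h)$, $P(h)=i(a(\overline h)-a^+(h))$, $U(h_1,h_2)=\exp(iP(h_1)+iQ(h_2))$. Expressions involving these unbounded operators and bounded operators "define a bounded operator $M$" if their matrix elements between exponential vectors (moving unbounded factors onto the vectors via adjoints) coincide with those of $M$. For $h=(h_1,h_2)\in\mathfrak{h}\otimes\mathbb{R}^2$, $O_h(\varphi)$ is the bounded operator $M$ (when it exists; $\varphi\in\mathrm{Dom}\,O_h$) with $\langle\mathcal{E}(k_1),M\mathcal{E}(k_2)\rangle=\frac1{2\pi}\int_{\mathbb{R}^2}\langle\mathcal{E}(k_1),U(uh_1,vh_2)\mathcal{E}(k_2)\rangle\mathcal{F}^{-1}\varphi(u,v)\mathrm{d}u\mathrm{d}v$, where $\mathcal{F}^{-1}\varphi(x,y)=\frac1{2\pi}\int\varphi(u,v)e^{-i(ux+vy)}\mathrm{d}u\mathrm{d}v$.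 $\mathcal{S}$ is the algebra generated by all $O_h(\varphi)$ with $h\in\mathfrak{h}\otimes\mathbb{R}^2$, $\varphi\in C^\infty(\mathbb{R}^2)$ all of whose partial derivatives lie in $\mathrm{Dom}\,O_h$. For $h\in\mathfrak{h}_\mathbb{C}\otimes\mathbb{C}^2$ and $F\in\mathcal{S}$, $D_hF$ is the bounded operator defined by $\frac i2[Q(h_1)-P(h_2),F]$. $\mathcal{S}_{\mathfrak{h},\delta}$ is the set of finite sums $u=\sum_jF_j\otimes h^{(j)}$ with $F_j\in\mathcal{S}$, $h^{(j)}\in\mathfrak{h}_\mathbb{C}\otimes\mathbb{C}^2$, such that $\delta(u):=\frac12\sum_j\{P(h^{(j)}_1)+Q(h^{(j)}_2),F_j\}-\sum_jD_{h^{(j)}}F_j$ defines a bounded operator on $\mathfrak{H}$ ($\{X,Y\}=XY+YX$); $\delta(u)$ is the divergence of $u$. *)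

theory Defs
  imports "HOL-Analysis.Analysis"
begin

text \<open>The real separable Hilbert space h is realised as l2 over a countable index
type 'i (a fixed orthonormal basis); its complexification h_C is l2('i; complex).
The symmetric Fock space over h_C is realised in the occupation-number basis:
vectors are square-summable complex functions on the finitely supported
occupation functions 'i => nat.\<close>

definition l2 :: "('i \<Rightarrow> complex) \<Rightarrow> bool" where
  "l2 k \<longleftrightarrow> (\<lambda>i. (cmod (k i))\<^sup>2) summable_on UNIV"

definition rl2 :: "('i \<Rightarrow> real) \<Rightarrow> bool" where
  "rl2 x \<longleftrightarrow> (\<lambda>i. (x i)\<^sup>2) summable_on UNIV"

definition hinner :: "('i \<Rightarrow> complex) \<Rightarrow> ('i \<Rightarrow> complex) \<Rightarrow> complex" where
  "hinner k l = (\<Sum>\<^sub>\<infinity>i. cnj (k i) * l i)"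

definition hconj :: "('i \<Rightarrow> complex) \<Rightarrow> ('i \<Rightarrow> complex)" where
  "hconj k = (\<lambda>i. cnj (k i))"

definition occ :: "('i \<Rightarrow> nat) set" where
  "occ = {n. finite {i. n i \<noteq> 0}}"

definition fock :: "(('i \<Rightarrow> nat) \<Rightarrow> complex) \<Rightarrow> bool" where
  "fock \<psi> \<longleftrightarrow> (\<forall>n. n \<notin> occ \<longrightarrow> \<psi> n = 0) \<and> (\<lambda>n. (cmod (\<psi> n))\<^sup>2) summable_on UNIV"

definition finner :: "(('i \<Rightarrow> nat) \<Rightarrow> complex) \<Rightarrow> (('i \<Rightarrow> nat) \<Rightarrow> complex) \<Rightarrow> complex" where
  "finner \<phi> \<psi> = (\<Sum>\<^sub>\<infinity>n. cnj (\<phi> n) * \<psi> n)"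

definition fnorm :: "(('i \<Rightarrow> nat) \<Rightarrow> complex) \<Rightarrow> real" where
  "fnorm \<psi> = sqrt (\<Sum>\<^sub>\<infinity>n. (cmod (\<psi> n))\<^sup>2)"

text \<open>exponential vector E(k) = sum_n k^(tensor n)/sqrt(n!) in the occupation basis\<close>
definition expv :: "('i \<Rightarrow> complex) \<Rightarrow> ('i \<Rightarrow> nat) \<Rightarrow> complex" where
  "expv k n = (if n \<in> occ then
      (\<Prod>i\<in>{i. n i \<noteq> 0}. k i ^ n i / complex_of_real (sqrt (fact (n i)))) else 0)"

definition incr :: "('i \<Rightarrow> nat) \<Rightarrow> 'i \<Rightarrow> ('i \<Rightarrow> nat)" where
  "incr n i = n(i := Suc (n i))"

definition decr :: "('i \<Rightarrow> nat) \<Rightarrow> 'i \<Rightarrow> ('i \<Rightarrow> nat)" where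
  "decr n i = n(i := n i - 1)"

definition ann :: "('i \<Rightarrow> complex) \<Rightarrow> (('i \<Rightarrow> nat) \<Rightarrow> complex) \<Rightarrow> (('i \<Rightarrow> nat) \<Rightarrow> complex)" where
  "ann h \<psi> = (\<lambda>n. if n \<in> occ then
      (\<Sum>\<^sub>\<infinity>i. cnj (h i) * complex_of_real (sqrt (real (Suc (n i)))) * \<psi> (incr n i)) else 0)"

definition cre :: "('i \<Rightarrow> complex) \<Rightarrow> (('i \<Rightarrow> nat) \<Rightarrow> complex) \<Rightarrow> (('i \<Rightarrow> nat) \<Rightarrow> complex)" where
  "cre h \<psi> = (\<lambda>n. if n \<in> occ then
      (\<Sum>i\<in>{i. n i \<noteq> 0}. h i * complex_of_real (sqrt (real (n i))) * \<psi> (decr n i)) else 0)"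

definition Qop :: "('i \<Rightarrow> complex) \<Rightarrow> (('i \<Rightarrow> nat) \<Rightarrow> complex) \<Rightarrow> (('i \<Rightarrow> nat) \<Rightarrow> complex)" where
  "Qop h \<psi> = (\<lambda>n. ann (hconj h) \<psi> n + cre h \<psi> n)"

definition Pop :: "('i \<Rightarrow> complex) \<Rightarrow> (('i \<Rightarrow> nat) \<Rightarrow> complex) \<Rightarrow> (('i \<Rightarrow> nat) \<Rightarrow> complex)" where
  "Pop h \<psi> = (\<lambda>n. \<i> * (ann (hconj h) \<psi> n - cre h \<psi> n))"

definition bounded_op :: "((('i \<Rightarrow> nat) \<Rightarrow> complex) \<Rightarrow> (('i \<Rightarrow> nat) \<Rightarrow> complex)) \<Rightarrow> bool" where
  "bounded_op T \<longleftrightarrow> (\<forall>\<psi>. fock \<psi> \<longrightarrow> fock (T \<psi>)) \<and>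
     (\<forall>\<psi> \<phi> c. fock \<psi> \<longrightarrow> fock \<phi> \<longrightarrow> T (\<lambda>n. c * \<psi> n + \<phi> n) = (\<lambda>n. c * T \<psi> n + T \<phi> n)) \<and>
     (\<exists>C. \<forall>\<psi>. fock \<psi> \<longrightarrow> fnorm (T \<psi>) \<le> C * fnorm \<psi>)"

text \<open>U(h1,h2) = exp(iP(h1)+iQ(h2)) = exp(a^+(z) - a(z)), z = h1 + i h2, acts on
exponential vectors by U(h1,h2) E(k) = exp(-|z|^2/2 - <z,k>) E(k+z).\<close>
definition weyl_expv :: "('i \<Rightarrow> real) \<Rightarrow> ('i \<Rightarrow> real) \<Rightarrow> ('i \<Rightarrow> complex) \<Rightarrow> (('i \<Rightarrow> nat) \<Rightarrow> complex)" where
  "weyl_expv h1 h2 k = (let z = (\<lambda>i. complex_of_real (h1 i) + \<i> * complex_of_real (h2 i)) in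
     (\<lambda>n. exp (- complex_of_real ((\<Sum>\<^sub>\<infinity>i. (cmod (z i))\<^sup>2) / 2) - hinner z k) * expv (\<lambda>i. k i + z i) n))"

definition finv :: "(real \<times> real \<Rightarrow> complex) \<Rightarrow> real \<times> real \<Rightarrow> complex" where
  "finv \<phi> p = complex_of_real (1 / (2 * pi)) *
     (\<integral>q. \<phi> q * exp (- \<i> * complex_of_real (fst q * fst p + snd q * snd p)) \<partial>lborel)"

definition O_integrand :: "('i \<Rightarrow> real) \<Rightarrow> ('i \<Rightarrow> real) \<Rightarrow> (real \<times> real \<Rightarrow> complex)
    \<Rightarrow> ('i \<Rightarrow> complex) \<Rightarrow> ('i \<Rightarrow> complex) \<Rightarrow> real \<times> real \<Rightarrow> complex" where
  "O_integrand h1 h2 \<phi> k1 k2 q =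
     finner (expv k1) (weyl_expv (\<lambda>i. fst q * h1 i) (\<lambda>i. snd q * h2 i) k2) * finv \<phi> q"

definition O_me :: "('i \<Rightarrow> real) \<Rightarrow> ('i \<Rightarrow> real) \<Rightarrow> (real \<times> real \<Rightarrow> complex)
    \<Rightarrow> ('i \<Rightarrow> complex) \<Rightarrow> ('i \<Rightarrow> complex) \<Rightarrow> complex" where
  "O_me h1 h2 \<phi> k1 k2 = complex_of_real (1 / (2 * pi)) * (\<integral>q. O_integrand h1 h2 \<phi> k1 k2 q \<partial>lborel)"

definition domO :: "('i \<Rightarrow> real) \<Rightarrow> ('i \<Rightarrow> real) \<Rightarrow> (real \<times> real \<Rightarrow> complex) set" where
  "domO h1 h2 = {\<phi>. integrable lborel \<phi> \<and>
     (\<forall>k1 k2. l2 k1 \<longrightarrow> l2 k2 \<longrightarrow> integrable lborel (O_integrand h1 h2 \<phi> k1 k2)) \<and>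
     (\<exists>M. bounded_op M \<and> (\<forall>k1 k2. l2 k1 \<longrightarrow> l2 k2 \<longrightarrow> finner (expv k1) (M (expv k2)) = O_me h1 h2 \<phi> k1 k2))}"

definition Oop :: "('i \<Rightarrow> real) \<Rightarrow> ('i \<Rightarrow> real) \<Rightarrow> (real \<times> real \<Rightarrow> complex)
    \<Rightarrow> (('i \<Rightarrow> nat) \<Rightarrow> complex) \<Rightarrow> (('i \<Rightarrow> nat) \<Rightarrow> complex)" where
  "Oop h1 h2 \<phi> = (SOME M. bounded_op M \<and>
     (\<forall>k1 k2. l2 k1 \<longrightarrow> l2 k2 \<longrightarrow> finner (expv k1) (M (expv k2)) = O_me h1 h2 \<phi> k1 k2))"

definition pd1 :: "(real \<times> real \<Rightarrow> complex) \<Rightarrow> real \<times> real \<Rightarrow> complex" where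
  "pd1 \<psi> = (\<lambda>p. vector_derivative (\<lambda>t. \<psi> (t, snd p)) (at (fst p)))"

definition pd2 :: "(real \<times> real \<Rightarrow> complex) \<Rightarrow> real \<times> real \<Rightarrow> complex" where
  "pd2 \<psi> = (\<lambda>p. vector_derivative (\<lambda>t. \<psi> (fst p, t)) (at (snd p)))"

inductive_set pds :: "(real \<times> real \<Rightarrow> complex) \<Rightarrow> (real \<times> real \<Rightarrow> complex) set"
  for \<phi> :: "real \<times> real \<Rightarrow> complex" where
  base: "\<phi> \<in> pds \<phi>"
| d1: "\<psi> \<in> pds \<phi> \<Longrightarrow> pd1 \<psi> \<in> pds \<phi>"
| d2: "\<psi> \<in> pds \<phi> \<Longrightarrow> pd2 \<psi> \<in> pds \<phi>"

definition smooth2 :: "(real \<times> real \<Rightarrow> complex) \<Rightarrow> bool" where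
  "smooth2 \<phi> \<longleftrightarrow> (\<forall>\<psi>\<in>pds \<phi>. continuous_on UNIV \<psi> \<and>
     (\<forall>x y. (\<lambda>t. \<psi> (t, y)) differentiable (at x) \<and> (\<lambda>t. \<psi> (x, t)) differentiable (at y)))"

inductive_set Salg :: "((('i \<Rightarrow> nat) \<Rightarrow> complex) \<Rightarrow> (('i \<Rightarrow> nat) \<Rightarrow> complex)) set" where
  gen: "rl2 h1 \<Longrightarrow> rl2 h2 \<Longrightarrow> smooth2 \<phi> \<Longrightarrow> pds \<phi> \<subseteq> domO h1 h2 \<Longrightarrow> Oop h1 h2 \<phi> \<in> Salg"
| add: "A \<in> Salg \<Longrightarrow> B \<in> Salg \<Longrightarrow> (\<lambda>\<psi> n. A \<psi> n + B \<psi> n) \<in> Salg"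
| mult: "A \<in> Salg \<Longrightarrow> B \<in> Salg \<Longrightarrow> (\<lambda>\<psi>. A (B \<psi>)) \<in> Salg"
| scal: "A \<in> Salg \<Longrightarrow> (\<lambda>\<psi> n. c * A \<psi> n) \<in> Salg"

text \<open>X = P(h1)+Q(h2) with adjoint P(conj h1)+Q(conj h2);
      Y = Q(h1)-P(h2) with adjoint Q(conj h1)-P(conj h2)\<close>
definition Xop :: "('i \<Rightarrow> complex) \<Rightarrow> ('i \<Rightarrow> complex) \<Rightarrow> (('i \<Rightarrow> nat) \<Rightarrow> complex) \<Rightarrow> (('i \<Rightarrow> nat) \<Rightarrow> complex)" where
  "Xop h1 h2 \<psi> = (\<lambda>n. Pop h1 \<psi> n + Qop h2 \<psi> n)"

definition Yop :: "('i \<Rightarrow> complex) \<Rightarrow> ('i \<Rightarrow> complex) \<Rightarrow> (('i \<Rightarrow> nat) \<Rightarrow> complex) \<Rightarrow> (('i \<Rightarrow> nat) \<Rightarrow> complex)" where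
  "Yop h1 h2 \<psi> = (\<lambda>n. Qop h1 \<psi> n - Pop h2 \<psi> n)"

text \<open>matrix element <E(f), D_h F E(g)> of (i/2)[Q(h1)-P(h2), F]\<close>
definition D_me :: "('i \<Rightarrow> complex) \<Rightarrow> ('i \<Rightarrow> complex) \<Rightarrow> ((('i \<Rightarrow> nat) \<Rightarrow> complex) \<Rightarrow> (('i \<Rightarrow> nat) \<Rightarrow> complex))
    \<Rightarrow> ('i \<Rightarrow> complex) \<Rightarrow> ('i \<Rightarrow> complex) \<Rightarrow> complex" where
  "D_me h1 h2 F f g = \<i> / 2 *
     (finner (Yop (hconj h1) (hconj h2) (expv f)) (F (expv g)) - finner (expv f) (F (Yop h1 h2 (expv g))))"

text \<open>matrix element <E(f), (1/2){P(h1)+Q(h2), F} E(g)>\<close>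
definition A_me :: "('i \<Rightarrow> complex) \<Rightarrow> ('i \<Rightarrow> complex) \<Rightarrow> ((('i \<Rightarrow> nat) \<Rightarrow> complex) \<Rightarrow> (('i \<Rightarrow> nat) \<Rightarrow> complex))
    \<Rightarrow> ('i \<Rightarrow> complex) \<Rightarrow> ('i \<Rightarrow> complex) \<Rightarrow> complex" where
  "A_me h1 h2 F f g = 1 / 2 *
     (finner (Xop (hconj h1) (hconj h2) (expv f)) (F (expv g)) + finner (expv f) (F (Xop h1 h2 (expv g))))"

text \<open>u = sum_{j<n} F j (tensor) (H1 j, H2 j)\<close>
definition delta_me :: "(nat \<Rightarrow> (('i \<Rightarrow> nat) \<Rightarrow> complex) \<Rightarrow> (('i \<Rightarrow> nat) \<Rightarrow> complex))
    \<Rightarrow> (nat \<Rightarrow> 'i \<Rightarrow> complex) \<Rightarrow> (nat \<Rightarrow> 'i \<Rightarrow> complex) \<Rightarrow> nat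
    \<Rightarrow> ('i \<Rightarrow> complex) \<Rightarrow> ('i \<Rightarrow> complex) \<Rightarrow> complex" where
  "delta_me F H1 H2 n f g = (\<Sum>j<n. A_me (H1 j) (H2 j) (F j) f g - D_me (H1 j) (H2 j) (F j) f g)"

definition in_Shd :: "(nat \<Rightarrow> (('i \<Rightarrow> nat) \<Rightarrow> complex) \<Rightarrow> (('i \<Rightarrow> nat) \<Rightarrow> complex))
    \<Rightarrow> (nat \<Rightarrow> 'i \<Rightarrow> complex) \<Rightarrow> (nat \<Rightarrow> 'i \<Rightarrow> complex) \<Rightarrow> nat \<Rightarrow> bool" where
  "in_Shd F H1 H2 n \<longleftrightarrow> (\<forall>j<n. F j \<in> Salg \<and> l2 (H1 j) \<and> l2 (H2 j)) \<and>
     (\<exists>M. bounded_op M \<and> (\<forall>f g. l2 f \<longrightarrow> l2 g \<longrightarrow> finner (expv f) (M (expv g)) = delta_me F H1 H2 n f g))"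

definition delta :: "(nat \<Rightarrow> (('i \<Rightarrow> nat) \<Rightarrow> complex) \<Rightarrow> (('i \<Rightarrow> nat) \<Rightarrow> complex))
    \<Rightarrow> (nat \<Rightarrow> 'i \<Rightarrow> complex) \<Rightarrow> (nat \<Rightarrow> 'i \<Rightarrow> complex) \<Rightarrow> nat
    \<Rightarrow> (('i \<Rightarrow> nat) \<Rightarrow> complex) \<Rightarrow> (('i \<Rightarrow> nat) \<Rightarrow> complex)" where
  "delta F H1 H2 n = (SOME M. bounded_op M \<and>
     (\<forall>f g. l2 f \<longrightarrow> l2 g \<longrightarrow> finner (expv f) (M (expv g)) = delta_me F H1 H2 n f g))"

end

theory Submission
  imports Defs
begin

text \<open>Exponential vectors are eigenvectors of the annihilation operators,
  \<open>a(h) E(g) = \<langle>h, g\<rangle> E(g)\<close>. Splitting \<open>P(h1) + Q(h2)\<close> and \<open>Q(h1) - P(h2)\<close> into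
  annihilation and creation parts, the creation parts contribute identical terms to
  \<open>(1/2){P(h1) + Q(h2), F}\<close> and to \<open>D\<^sub>h F = (i/2)[Q(h1) - P(h2), F]\<close>, so they cancel
  in the divergence and only the eigenvalues \<open>\<langle>h, g\<rangle>\<close> and \<open>\<langle>f, h\<rangle>\<close> survive.
  The analytic input is that \<open>E(g)\<close> and \<open>a\<^sup>+(h) E(g)\<close> lie in the Fock space: the
  operators in \<open>\<S>\<close> are only known to be linear there, and this splitting has to be
  pushed through them.\<close>

lemma summable_on_mult_of_square_summable:
  fixes a b :: "'a \<Rightarrow> 'b::{real_normed_div_algebra,banach,second_countable_topology}"
  assumes "(\<lambda>i. (norm (a i))\<^sup>2) summable_on A" "(\<lambda>i. (norm (b i))\<^sup>2) summable_on A"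
  shows "(\<lambda>i. a i * b i) summable_on A"
proof -
  have "(\<lambda>i. norm (a i * a i)) summable_on A" "(\<lambda>i. norm (b i * b i)) summable_on A"
    using assms by (simp_all add: norm_mult power2_eq_square)
  then show ?thesis by (rule abs_summable_summable[OF abs_summable_product])
qed

lemma square_summable_add:
  fixes a b :: "'a \<Rightarrow> 'b::real_normed_vector"
  assumes "(\<lambda>i. (norm (a i))\<^sup>2) summable_on A" "(\<lambda>i. (norm (b i))\<^sup>2) summable_on A"
  shows "(\<lambda>i. (norm (a i + b i))\<^sup>2) summable_on A"
proof (rule summable_on_comparison_test)
  show "(\<lambda>i. 2 * (norm (a i))\<^sup>2 + 2 * (norm (b i))\<^sup>2) summable_on A"
    using assms by (intro summable_on_add summable_on_cmult_right)
  fix i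
  have "(norm (a i + b i))\<^sup>2 \<le> (norm (a i) + norm (b i))\<^sup>2"
    by (intro power_mono norm_triangle_ineq) simp
  also have "\<dots> \<le> 2 * (norm (a i))\<^sup>2 + 2 * (norm (b i))\<^sup>2"
    using sum_squares_bound[of "norm (a i)" "norm (b i)"] by (simp add: power2_sum)
  finally show "(norm (a i + b i))\<^sup>2 \<le> 2 * (norm (a i))\<^sup>2 + 2 * (norm (b i))\<^sup>2" .
qed simp

lemma fock_zero: "fock (\<lambda>n. 0)"
  by (simp add: fock_def)

lemma fock_lincomb:
  assumes "fock \<psi>" "fock \<phi>"
  shows "fock (\<lambda>n. c * \<psi> n + \<phi> n)"
proof -
  have "(\<lambda>n. (cmod (c * \<psi> n))\<^sup>2) summable_on UNIV"
    using assms(1) unfolding fock_def norm_mult power_mult_distrib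
    by (intro summable_on_cmult_right) simp
  then have "(\<lambda>n. (cmod (c * \<psi> n + \<phi> n))\<^sup>2) summable_on UNIV"
    using assms(2) by (intro square_summable_add) (simp_all add: fock_def)
  then show ?thesis using assms by (simp add: fock_def)
qed

lemma fock_scale: "fock \<psi> \<Longrightarrow> fock (\<lambda>n. c * \<psi> n)"
  using fock_lincomb[OF _ fock_zero] by simp

lemma finner_summable: "fock \<phi> \<Longrightarrow> fock \<psi> \<Longrightarrow> (\<lambda>n. cnj (\<phi> n) * \<psi> n) summable_on UNIV"
  by (rule summable_on_mult_of_square_summable) (auto simp: fock_def)

lemma finner_scale_right: "finner \<phi> (\<lambda>n. c * \<psi> n) = c * finner \<phi> \<psi>"
  unfolding finner_def by (simp add: infsum_cmult_right'[symmetric] algebra_simps)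

lemma finner_scale_left: "finner (\<lambda>n. c * \<psi> n) \<phi> = cnj c * finner \<psi> \<phi>"
  unfolding finner_def by (simp add: infsum_cmult_right'[symmetric] algebra_simps)

lemma finner_lincomb_right:
  assumes "fock \<phi>" "fock \<psi>" "fock \<eta>"
  shows "finner \<phi> (\<lambda>n. c * \<psi> n + \<eta> n) = c * finner \<phi> \<psi> + finner \<phi> \<eta>"
proof -
  have "finner \<phi> (\<lambda>n. c * \<psi> n + \<eta> n) = finner \<phi> (\<lambda>n. c * \<psi> n) + finner \<phi> \<eta>"
    unfolding finner_def distrib_left
    by (intro infsum_add finner_summable fock_scale assms)
  then show ?thesis by (simp add: finner_scale_right)
qed

lemma finner_lincomb_left:
  assumes "fock \<phi>" "fock \<psi>" "fock \<eta>"
  shows "finner (\<lambda>n. c * \<psi> n + \<eta> n) \<phi> = cnj c * finner \<psi> \<phi> + finner \<eta> \<phi>"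
proof -
  have "finner (\<lambda>n. c * \<psi> n + \<eta> n) \<phi> = finner (\<lambda>n. c * \<psi> n) \<phi> + finner \<eta> \<phi>"
    unfolding finner_def complex_cnj_add distrib_right
    by (intro infsum_add finner_summable fock_scale assms)
  then show ?thesis by (simp add: finner_scale_left)
qed

section \<open>Exponential vectors\<close>

lemma incr_in_occ:
  assumes "n \<in> occ"
  shows "incr n i \<in> occ"
proof -
  have "{j. incr n i j \<noteq> 0} \<subseteq> insert i {j. n j \<noteq> 0}"
    by (auto simp: incr_def)
  with assms show ?thesis
    unfolding occ_def by (auto intro: finite_subset)
qed

lemma decr_in_occ:
  assumes "n \<in> occ"
  shows "decr n i \<in> occ"
proof -
  have "{j. decr n i j \<noteq> 0} \<subseteq> {j. n j \<noteq> 0}"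
    by (auto simp: decr_def)
  with assms show ?thesis
    unfolding occ_def by (auto intro: finite_subset)
qed

lemma expv_eq_prod_superset:
  assumes "n \<in> occ" "finite T" "{i. n i \<noteq> 0} \<subseteq> T"
  shows "expv k n = (\<Prod>i\<in>T. k i ^ n i / complex_of_real (sqrt (fact (n i))))"
  unfolding expv_def using assms by (simp, intro prod.mono_neutral_left) auto

lemma norm_expv_square:
  assumes "n \<in> occ" "finite T" "{i. n i \<noteq> 0} \<subseteq> T"
  shows "(cmod (expv k n))\<^sup>2 = (\<Prod>i\<in>T. ((cmod (k i))\<^sup>2) ^ n i / fact (n i))"
  by (simp add: expv_eq_prod_superset[OF assms] prod_norm[symmetric] prod_power_distrib
      norm_divide norm_power power_divide mult.commute flip: power_mult)

lemma exp_series_partial_sum_le: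
  fixes x :: real
  assumes "0 \<le> x" "finite K"
  shows "(\<Sum>k\<in>K. x ^ k / fact k) \<le> exp x"
proof -
  have "(\<Sum>k\<in>K. x ^ k /\<^sub>R fact k) \<le> (\<Sum>k. x ^ k /\<^sub>R fact k)"
    using assms by (intro sum_le_suminf summable_exp_generic) auto
  then show ?thesis by (simp add: exp_def divide_inverse mult.commute)
qed

lemma sum_prod_exp_series_le:
  fixes a :: "'i \<Rightarrow> real"
  assumes a: "\<And>i. 0 \<le> a i" and I: "finite I" and N: "finite N"
    and supp: "\<And>n i. n \<in> N \<Longrightarrow> i \<notin> I \<Longrightarrow> n i = 0"
  shows "(\<Sum>n\<in>N. \<Prod>i\<in>I. a i ^ n i / fact (n i)) \<le> (\<Prod>i\<in>I. exp (a i))"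
proof -
  let ?t = "\<lambda>n. \<Prod>i\<in>I. a i ^ n i / fact (n i)"
  obtain m where m: "\<And>n i. n \<in> N \<Longrightarrow> i \<in> I \<Longrightarrow> n i \<le> m"
    using finite_nat_set_iff_bounded_le[of "(\<lambda>(n, i). n i) ` (N \<times> I)"] N I by fastforce
  have "inj_on (\<lambda>n. restrict n I) N"
  proof (rule inj_onI, rule ext)
    fix n n' i assume nN: "n \<in> N" "n' \<in> N" and eq: "restrict n I = restrict n' I"
    show "n i = n' i"
    proof (cases "i \<in> I")
      case True then show ?thesis using fun_cong[OF eq, of i] by simp
    next
      case False then show ?thesis using supp[of n i] supp[of n' i] nN by simp
    qed
  qed
  then have "(\<Sum>n\<in>N. ?t n) = (\<Sum>g\<in>(\<lambda>n. restrict n I) ` N. ?t g)"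
    by (simp add: sum.reindex)
  also have "\<dots> \<le> (\<Sum>g\<in>PiE I (\<lambda>_. {..m}). ?t g)"
    using m a I by (intro sum_mono2 finite_PiE prod_nonneg) auto
  also have "\<dots> = (\<Prod>i\<in>I. \<Sum>k\<le>m. a i ^ k / fact k)"
    using I by (simp add: prod_sum_PiE)
  also have "\<dots> \<le> (\<Prod>i\<in>I. exp (a i))"
    using a by (intro prod_mono exp_series_partial_sum_le conjI sum_nonneg) auto
  finally show ?thesis .
qed

lemma fock_expv:
  fixes k :: "'i \<Rightarrow> complex"
  assumes "l2 k"
  shows "fock (expv k)"
proof -
  let ?a = "\<lambda>i. (cmod (k i))\<^sup>2"
  have "(\<lambda>n. (cmod (expv k n))\<^sup>2) summable_on UNIV"
  proof (rule nonneg_bdd_above_summable_on, simp, rule bdd_aboveI, clarify)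
    fix N :: "('i \<Rightarrow> nat) set" assume N: "finite N"
    let ?I = "\<Union>n\<in>N \<inter> occ. {i. n i \<noteq> 0}"
    have I: "finite ?I" using N by (auto simp: occ_def)
    have "(\<Sum>n\<in>N. (cmod (expv k n))\<^sup>2) = (\<Sum>n\<in>N \<inter> occ. (cmod (expv k n))\<^sup>2)"
      using N by (intro sum.mono_neutral_right) (auto simp: expv_def)
    also have "\<dots> = (\<Sum>n\<in>N \<inter> occ. \<Prod>i\<in>?I. ?a i ^ n i / fact (n i))"
      using I by (intro sum.cong refl norm_expv_square) auto
    also have "\<dots> \<le> (\<Prod>i\<in>?I. exp (?a i))"
      using N I by (intro sum_prod_exp_series_le) auto
    also have "\<dots> = exp (\<Sum>i\<in>?I. ?a i)"
      using I by (simp add: exp_sum)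
    also have "\<dots> \<le> exp (\<Sum>\<^sub>\<infinity>i. ?a i)"
      using assms I by (simp add: l2_def finite_sum_le_infsum)
    finally show "(\<Sum>n\<in>N. (cmod (expv k n))\<^sup>2) \<le> exp (\<Sum>\<^sub>\<infinity>i. ?a i)" .
  qed
  then show ?thesis by (simp add: fock_def expv_def)
qed

lemma sqrt_fact_Suc: "sqrt (fact (Suc m)) = sqrt (Suc m) * sqrt (fact m)"
  by (simp add: real_sqrt_mult)

lemma sqrt_Suc_mult_expv_incr:
  assumes "n \<in> occ"
  shows "complex_of_real (sqrt (Suc (n i))) * expv g (incr n i) = g i * expv g n"
proof -
  let ?S = "insert i {j. n j \<noteq> 0}"
  let ?t = "\<lambda>m j. g j ^ m j / complex_of_real (sqrt (fact (m j)))"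
  have S: "finite ?S" "i \<in> ?S" using assms by (auto simp: occ_def)
  have "expv g (incr n i) = (\<Prod>j\<in>?S. ?t (incr n i) j)"
    by (rule expv_eq_prod_superset[OF incr_in_occ[OF assms] S(1)]) (auto simp: incr_def)
  also have "\<dots> = ?t (incr n i) i * (\<Prod>j\<in>?S - {i}. ?t (incr n i) j)"
    by (rule prod.remove[OF S])
  also have "(\<Prod>j\<in>?S - {i}. ?t (incr n i) j) = (\<Prod>j\<in>?S - {i}. ?t n j)"
    by (intro prod.cong refl) (auto simp: incr_def)
  finally have incr: "expv g (incr n i) = ?t (incr n i) i * (\<Prod>j\<in>?S - {i}. ?t n j)" .
  have "expv g n = (\<Prod>j\<in>?S. ?t n j)"
    by (rule expv_eq_prod_superset[OF assms S(1)]) auto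
  also have "\<dots> = ?t n i * (\<Prod>j\<in>?S - {i}. ?t n j)"
    by (rule prod.remove[OF S])
  finally have n: "expv g n = ?t n i * (\<Prod>j\<in>?S - {i}. ?t n j)" .
  have "complex_of_real (sqrt (Suc (n i))) * ?t (incr n i) i = g i * ?t n i"
    by (simp add: incr_def sqrt_fact_Suc field_simps del: fact_Suc)
  then show ?thesis
    by (simp only: incr n mult.assoc[symmetric])
qed

lemma ann_expv: "ann h (expv g) = (\<lambda>n. hinner h g * expv g n)"
proof
  fix n
  show "ann h (expv g) n = hinner h g * expv g n"
  proof (cases "n \<in> occ")
    case True
    then have "ann h (expv g) n = (\<Sum>\<^sub>\<infinity>i. cnj (h i) * (g i * expv g n))"
      by (simp only: ann_def if_P mult.assoc sqrt_Suc_mult_expv_incr)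
    then show ?thesis by (simp add: infsum_cmult_left'[symmetric] hinner_def mult.assoc)
  qed (simp add: ann_def expv_def)
qed

section \<open>Creation operators on exponential vectors\<close>

lemma first_order_le_prod_add:
  fixes A D :: "'a \<Rightarrow> real"
  assumes "finite S" "\<And>j. 0 \<le> A j" "\<And>j. 0 \<le> D j"
  shows "(\<Prod>j\<in>S. A j) + (\<Sum>i\<in>S. D i * (\<Prod>j\<in>S - {i}. A j)) \<le> (\<Prod>j\<in>S. A j + D j)"
  using assms(1)
proof (induction S rule: finite_induct)
  case (insert k S)
  let ?L = "\<lambda>S. (\<Prod>j\<in>S. A j) + (\<Sum>i\<in>S. D i * (\<Prod>j\<in>S - {i}. A j))"
  have "(\<Sum>i\<in>S. D i * (\<Prod>j\<in>insert k S - {i}. A j)) = A k * (\<Sum>i\<in>S. D i * (\<Prod>j\<in>S - {i}. A j))"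
    unfolding sum_distrib_left
  proof (intro sum.cong refl)
    fix i assume "i \<in> S"
    then have "insert k S - {i} = insert k (S - {i})" using insert by auto
    then show "D i * (\<Prod>j\<in>insert k S - {i}. A j) = A k * (D i * (\<Prod>j\<in>S - {i}. A j))"
      using insert by simp
  qed
  then have "?L (insert k S) = A k * ?L S + D k * (\<Prod>j\<in>S. A j)"
    using insert by (simp add: algebra_simps)
  also have "\<dots> \<le> (A k + D k) * ?L S"
    using assms(2,3) by (simp add: algebra_simps prod_nonneg sum_nonneg)
  also have "\<dots> \<le> (A k + D k) * (\<Prod>j\<in>S. A j + D j)"
    using assms(2,3)[of k] insert.IH by (intro mult_left_mono) auto
  finally show ?case using insert by simp
qed simp

lemma first_order_le_power_add:
  fixes a b :: real
  assumes "0 \<le> a" "0 \<le> b"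
  shows "a ^ m + m * b * a ^ (m - 1) \<le> (a + b) ^ m"
proof (induction m)
  case (Suc m)
  have "a ^ Suc m + Suc m * b * a ^ m \<le> (a + b) * (a ^ m + m * b * a ^ (m - 1))"
    using assms by (cases m) (simp_all add: algebra_simps)
  also have "\<dots> \<le> (a + b) * (a + b) ^ m"
    using Suc assms by (intro mult_left_mono) auto
  finally show ?case by simp
qed simp

lemma expv_coeff_first_order_le:
  fixes a b :: real
  assumes "0 \<le> a" "0 \<le> b"
  shows "a ^ m / sqrt (fact m) + b * sqrt m * (a ^ (m - 1) / sqrt (fact (m - 1)))
     \<le> (a + b) ^ m / sqrt (fact m)"
proof (cases m)
  case (Suc k)
  then have "sqrt m / sqrt (fact (m - 1)) = m / sqrt (fact m)"
    by (simp add: sqrt_fact_Suc field_simps del: fact_Suc)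
  then have "b * sqrt m * (a ^ (m - 1) / sqrt (fact (m - 1))) = m * b * a ^ (m - 1) / sqrt (fact m)"
    by (simp add: field_simps)
  then show ?thesis
    using first_order_le_power_add[OF assms, of m] by (simp add: divide_right_mono flip: add_divide_distrib)
qed simp

text \<open>Componentwise, \<open>a\<^sup>+(h) E(g)\<close> is the first-order term in \<open>t\<close> of \<open>E(g + t h)\<close>;
  with absolute values everywhere this term is dominated by the full expansion at \<open>t = 1\<close>.\<close>
lemma norm_cre_expv_le:
  assumes "n \<in> occ"
  shows "cmod (cre h (expv g) n) \<le> cmod (expv (\<lambda>i. complex_of_real (cmod (g i) + cmod (h i))) n)"
proof -
  let ?S = "{i. n i \<noteq> 0}"
  let ?c = "\<lambda>a m. a ^ m / sqrt (fact m)"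
  define A where "A j = ?c (cmod (g j)) (n j)" for j
  define D where "D j = cmod (h j) * sqrt (n j) * ?c (cmod (g j)) (n j - 1)" for j
  have S: "finite ?S" using assms by (simp add: occ_def)
  have A_nonneg: "0 \<le> A j" and D_nonneg: "0 \<le> D j" for j
    by (simp_all add: A_def D_def)
  have norm_coeff: "cmod (k ^ m / complex_of_real (sqrt (fact m))) = ?c (cmod k) m" for k m
    by (simp add: norm_divide norm_power)
  have decr: "cmod (expv g (decr n i)) = ?c (cmod (g i)) (n i - 1) * (\<Prod>j\<in>?S - {i}. A j)"
    if i: "i \<in> ?S" for i
  proof -
    let ?t = "\<lambda>j. g j ^ decr n i j / complex_of_real (sqrt (fact (decr n i j)))"
    have "expv g (decr n i) = (\<Prod>j\<in>?S. ?t j)"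
      by (rule expv_eq_prod_superset[OF decr_in_occ[OF assms] S]) (auto simp: decr_def)
    also have "\<dots> = ?t i * (\<Prod>j\<in>?S - {i}. ?t j)"
      by (rule prod.remove[OF S i])
    finally have "cmod (expv g (decr n i)) = cmod (?t i) * (\<Prod>j\<in>?S - {i}. cmod (?t j))"
      by (simp only: norm_mult prod_norm)
    moreover have "(\<Prod>j\<in>?S - {i}. cmod (?t j)) = (\<Prod>j\<in>?S - {i}. A j)"
      by (intro prod.cong refl) (auto simp: decr_def A_def norm_coeff)
    ultimately show ?thesis by (simp add: norm_coeff decr_def)
  qed
  have "cmod (cre h (expv g) n) \<le> (\<Sum>i\<in>?S. cmod (h i * sqrt (n i) * expv g (decr n i)))"
    using assms by (simp add: cre_def norm_sum)
  also have "\<dots> = (\<Sum>i\<in>?S. D i * (\<Prod>j\<in>?S - {i}. A j))"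
    by (intro sum.cong refl) (simp add: norm_mult decr D_def mult.assoc)
  also have "\<dots> \<le> (\<Prod>j\<in>?S. A j) + (\<Sum>i\<in>?S. D i * (\<Prod>j\<in>?S - {i}. A j))"
    by (simp add: A_nonneg prod_nonneg)
  also have "\<dots> \<le> (\<Prod>j\<in>?S. A j + D j)"
    by (rule first_order_le_prod_add[OF S A_nonneg D_nonneg])
  also have "\<dots> \<le> (\<Prod>j\<in>?S. ?c (cmod (g j) + cmod (h j)) (n j))"
    unfolding A_def D_def
    by (intro prod_mono conjI add_nonneg_nonneg expv_coeff_first_order_le) simp_all
  also have "\<dots> = cmod (expv (\<lambda>i. complex_of_real (cmod (g i) + cmod (h i))) n)"
    by (simp add: expv_eq_prod_superset[OF assms S] prod_norm[symmetric] norm_coeff del: of_real_add)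
  finally show ?thesis .
qed

lemma fock_cre_expv:
  fixes g h :: "'i \<Rightarrow> complex"
  assumes "l2 g" "l2 h"
  shows "fock (cre h (expv g))"
proof -
  let ?k = "\<lambda>i. complex_of_real (cmod (g i) + cmod (h i))"
  have "l2 ?k"
    using square_summable_add[of "\<lambda>i. complex_of_real (cmod (g i))" UNIV "\<lambda>i. complex_of_real (cmod (h i))"]
      assms by (simp add: l2_def)
  then have "fock (expv ?k)"
    by (rule fock_expv)
  then have "(\<lambda>n. (cmod (expv ?k n))\<^sup>2) summable_on UNIV"
    by (simp add: fock_def)
  then have "(\<lambda>n. (cmod (cre h (expv g) n))\<^sup>2) summable_on UNIV"
  proof (rule summable_on_comparison_test)
    fix n :: "'i \<Rightarrow> nat"
    show "(cmod (cre h (expv g) n))\<^sup>2 \<le> (cmod (expv ?k n))\<^sup>2"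
    proof (cases "n \<in> occ")
      case True
      then show ?thesis using norm_cre_expv_le[OF True, of h g] by (simp add: power_mono)
    qed (simp add: cre_def)
  qed simp
  then show ?thesis by (simp add: fock_def cre_def)
qed

section \<open>Divergence on exponential vectors\<close>

definition fock_linear :: "((('i \<Rightarrow> nat) \<Rightarrow> complex) \<Rightarrow> (('i \<Rightarrow> nat) \<Rightarrow> complex)) \<Rightarrow> bool" where
  "fock_linear T \<longleftrightarrow> (\<forall>\<psi>. fock \<psi> \<longrightarrow> fock (T \<psi>)) \<and>
     (\<forall>\<psi> \<phi> c. fock \<psi> \<longrightarrow> fock \<phi> \<longrightarrow> T (\<lambda>n. c * \<psi> n + \<phi> n) = (\<lambda>n. c * T \<psi> n + T \<phi> n))"

lemma fock_linear_lincomb: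
  "fock_linear T \<Longrightarrow> fock \<psi> \<Longrightarrow> fock \<phi> \<Longrightarrow> T (\<lambda>n. c * \<psi> n + \<phi> n) = (\<lambda>n. c * T \<psi> n + T \<phi> n)"
  by (simp add: fock_linear_def)

lemma fock_linear_fock: "fock_linear T \<Longrightarrow> fock \<psi> \<Longrightarrow> fock (T \<psi>)"
  by (simp add: fock_linear_def)

lemma fock_linear_scale:
  assumes "fock_linear T" "fock \<psi>"
  shows "T (\<lambda>n. c * \<psi> n) = (\<lambda>n. c * T \<psi> n)"
proof -
  have "T (\<lambda>n. 0) = (\<lambda>n. 1 * T (\<lambda>n. 0) n + T (\<lambda>n. 0) n)"
    using fock_linear_lincomb[OF assms(1) fock_zero fock_zero, of 1] by simp
  then have "T (\<lambda>n. 0) = (\<lambda>n. 0)"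
    by (simp add: fun_eq_iff)
  then show ?thesis
    using fock_linear_lincomb[OF assms fock_zero, of c] by simp
qed

lemma bounded_op_Oop:
  assumes "\<phi> \<in> domO h1 h2"
  shows "bounded_op (Oop h1 h2 \<phi>)"
proof -
  have "\<exists>M. bounded_op M \<and>
      (\<forall>k1 k2. l2 k1 \<longrightarrow> l2 k2 \<longrightarrow> finner (expv k1) (M (expv k2)) = O_me h1 h2 \<phi> k1 k2)"
    using assms by (simp add: domO_def)
  then show ?thesis
    unfolding Oop_def by (rule someI2_ex) blast
qed

lemma Salg_fock_linear: "A \<in> Salg \<Longrightarrow> fock_linear A"
proof (induction rule: Salg.induct)
  case (gen h1 h2 \<phi>)
  then have "bounded_op (Oop h1 h2 \<phi>)"
    by (intro bounded_op_Oop) (auto intro: pds.base)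
  then show ?case
    by (simp add: bounded_op_def fock_linear_def)
next
  case (add A B)
  then show ?case
    by (auto simp: fock_linear_def fock_lincomb[where c = 1, simplified] algebra_simps)
next
  case (mult A B)
  then show ?case
    by (simp add: fock_linear_def)
next
  case (scal A c)
  then show ?case
    by (auto simp: fock_linear_def fock_scale algebra_simps)
qed

lemma l2_hconj: "l2 k \<Longrightarrow> l2 (hconj k)"
  by (simp add: l2_def hconj_def)

lemma hconj_hconj [simp]: "hconj (hconj k) = k"
  by (simp add: hconj_def)

lemma hinner_lincomb_conj_left:
  assumes "l2 f" "l2 g" "l2 h"
  shows "hinner (\<lambda>i. c * f i + d * cnj (g i)) h = cnj c * cnj (hinner h f) + cnj d * hinner (hconj h) g"
proof -
  have "(\<lambda>i. cnj (f i) * h i) summable_on UNIV" "(\<lambda>i. g i * h i) summable_on UNIV"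
    using assms by (auto intro: summable_on_mult_of_square_summable simp: l2_def)
  then have "hinner (\<lambda>i. c * f i + d * cnj (g i)) h
      = cnj c * (\<Sum>\<^sub>\<infinity>i. cnj (f i) * h i) + cnj d * (\<Sum>\<^sub>\<infinity>i. g i * h i)"
    unfolding hinner_def
    by (simp add: distrib_right mult.assoc infsum_add summable_on_cmult_right infsum_cmult_right')
  then show ?thesis
    by (simp add: hinner_def hconj_def mult.commute flip: infsum_cnj)
qed

text \<open>The creation part of \<open>Xop h1 h2 = P(h1) + Q(h2)\<close>; the creation part of
  \<open>Yop h1 h2 = Q(h1) - P(h2)\<close> is \<open>\<i>\<close> times it.\<close>
definition Xop_cre :: "('i \<Rightarrow> complex) \<Rightarrow> ('i \<Rightarrow> complex)
    \<Rightarrow> (('i \<Rightarrow> nat) \<Rightarrow> complex) \<Rightarrow> (('i \<Rightarrow> nat) \<Rightarrow> complex)" where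
  "Xop_cre h1 h2 \<psi> = (\<lambda>n. - \<i> * cre h1 \<psi> n + cre h2 \<psi> n)"

lemma fock_Xop_cre_expv: "l2 h1 \<Longrightarrow> l2 h2 \<Longrightarrow> l2 g \<Longrightarrow> fock (Xop_cre h1 h2 (expv g))"
  unfolding Xop_cre_def by (intro fock_lincomb fock_cre_expv)

lemma Xop_expv:
  "Xop h1 h2 (expv g) =
    (\<lambda>n. (\<i> * hinner (hconj h1) g + hinner (hconj h2) g) * expv g n + Xop_cre h1 h2 (expv g) n)"
  by (simp add: fun_eq_iff Xop_def Pop_def Qop_def Xop_cre_def ann_expv algebra_simps)

lemma Yop_expv:
  "Yop h1 h2 (expv g) =
    (\<lambda>n. (hinner (hconj h1) g - \<i> * hinner (hconj h2) g) * expv g n + \<i> * Xop_cre h1 h2 (expv g) n)"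
  by (simp add: fun_eq_iff Yop_def Pop_def Qop_def Xop_cre_def ann_expv algebra_simps)

lemma finner_Xop_Yop_expv_left:
  assumes "l2 h1" "l2 h2" "l2 f" "fock \<eta>"
  shows "finner (Xop h1 h2 (expv f)) \<eta> =
      cnj (\<i> * hinner (hconj h1) f + hinner (hconj h2) f) * finner (expv f) \<eta>
      + finner (Xop_cre h1 h2 (expv f)) \<eta>"
    and "finner (Yop h1 h2 (expv f)) \<eta> =
      cnj (hinner (hconj h1) f - \<i> * hinner (hconj h2) f) * finner (expv f) \<eta>
      - \<i> * finner (Xop_cre h1 h2 (expv f)) \<eta>"
  using assms
  by (simp_all add: Xop_expv Yop_expv fock_expv fock_Xop_cre_expv fock_scale
      finner_lincomb_left finner_scale_left)

lemma finner_Xop_Yop_expv_right: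
  assumes F: "fock_linear F" and "l2 h1" "l2 h2" "l2 g" "fock \<phi>"
  shows "finner \<phi> (F (Xop h1 h2 (expv g))) =
      (\<i> * hinner (hconj h1) g + hinner (hconj h2) g) * finner \<phi> (F (expv g))
      + finner \<phi> (F (Xop_cre h1 h2 (expv g)))"
    and "finner \<phi> (F (Yop h1 h2 (expv g))) =
      (hinner (hconj h1) g - \<i> * hinner (hconj h2) g) * finner \<phi> (F (expv g))
      + \<i> * finner \<phi> (F (Xop_cre h1 h2 (expv g)))"
proof -
  have E: "fock (expv g)" and C: "fock (Xop_cre h1 h2 (expv g))"
    using assms by (simp_all add: fock_expv fock_Xop_cre_expv)
  have FE: "fock (F (expv g))" and FC: "fock (F (Xop_cre h1 h2 (expv g)))"
    using F E C by (simp_all add: fock_linear_fock)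
  show "finner \<phi> (F (Xop h1 h2 (expv g))) =
      (\<i> * hinner (hconj h1) g + hinner (hconj h2) g) * finner \<phi> (F (expv g))
      + finner \<phi> (F (Xop_cre h1 h2 (expv g)))"
    unfolding Xop_expv fock_linear_lincomb[OF F E C]
    by (rule finner_lincomb_right[OF \<open>fock \<phi>\<close> FE FC])
  show "finner \<phi> (F (Yop h1 h2 (expv g))) =
      (hinner (hconj h1) g - \<i> * hinner (hconj h2) g) * finner \<phi> (F (expv g))
      + \<i> * finner \<phi> (F (Xop_cre h1 h2 (expv g)))"
    unfolding Yop_expv fock_linear_lincomb[OF F E fock_scale[OF C]] fock_linear_scale[OF F C]
    by (simp add: finner_lincomb_right[OF \<open>fock \<phi>\<close> FE fock_scale[OF FC]] finner_scale_right)
qed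

lemma A_me_minus_D_me_expv:
  assumes F: "fock_linear F" and h: "l2 h1" "l2 h2" and fg: "l2 f" "l2 g"
  shows "A_me h1 h2 F f g - D_me h1 h2 F f g =
    (hinner (\<lambda>i. \<i> * f i - \<i> * cnj (g i)) h1 + hinner (\<lambda>i. f i + cnj (g i)) h2)
      * finner (expv f) (F (expv g))"
proof -
  have Ef: "fock (expv f)" and FEg: "fock (F (expv g))"
    using F fg by (simp_all add: fock_expv fock_linear_fock)
  have "l2 (hconj h1)" "l2 (hconj h2)"
    using h by (simp_all add: l2_hconj)
  note left = finner_Xop_Yop_expv_left[OF this fg(1) FEg, unfolded hconj_hconj]
  note right = finner_Xop_Yop_expv_right[OF F h fg(2) Ef]
  \<comment> \<open>the creation parts cancel between anticommutator and commutator\<close>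
  have me: "A_me h1 h2 F f g - D_me h1 h2 F f g =
      (- \<i> * cnj (hinner h1 f) + \<i> * hinner (hconj h1) g + cnj (hinner h2 f) + hinner (hconj h2) g)
        * finner (expv f) (F (expv g))"
    unfolding A_me_def D_me_def left right by (simp add: algebra_simps)
  have hinner1: "hinner (\<lambda>i. \<i> * f i - \<i> * cnj (g i)) h1 = - \<i> * cnj (hinner h1 f) + \<i> * hinner (hconj h1) g"
    using hinner_lincomb_conj_left[OF fg h(1), of \<i> "- \<i>"] by simp
  have hinner2: "hinner (\<lambda>i. f i + cnj (g i)) h2 = cnj (hinner h2 f) + hinner (hconj h2) g"
    using hinner_lincomb_conj_left[OF fg h(2), of 1 1] by simp
  show ?thesis
    unfolding me hinner1 hinner2 by (simp add: algebra_simps)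
qed

lemma delta_expv:
  assumes "in_Shd F H1 H2 n" "l2 f" "l2 g"
  shows "finner (expv f) (delta F H1 H2 n (expv g)) = delta_me F H1 H2 n f g"
proof -
  have "\<exists>M. bounded_op M \<and>
      (\<forall>f g. l2 f \<longrightarrow> l2 g \<longrightarrow> finner (expv f) (M (expv g)) = delta_me F H1 H2 n f g)"
    using assms(1) by (simp add: in_Shd_def)
  then have "\<forall>f g. l2 f \<longrightarrow> l2 g \<longrightarrow> finner (expv f) (delta F H1 H2 n (expv g)) = delta_me F H1 H2 n f g"
    unfolding delta_def by (rule someI2_ex) blast
  then show ?thesis
    using assms(2,3) by blast
qed

theorem theorem6p5:
  fixes F :: "nat \<Rightarrow> (('i::countable \<Rightarrow> nat) \<Rightarrow> complex) \<Rightarrow> (('i \<Rightarrow> nat) \<Rightarrow> complex)"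
    and H1 H2 :: "nat \<Rightarrow> 'i \<Rightarrow> complex"
    and n :: nat
    and f g :: "'i \<Rightarrow> complex"
  assumes "in_Shd F H1 H2 n"
    and "l2 f" and "l2 g"
  shows "finner (expv f) (delta F H1 H2 n (expv g)) =
    (\<Sum>j<n. (hinner (\<lambda>i. \<i> * f i - \<i> * cnj (g i)) (H1 j) + hinner (\<lambda>i. f i + cnj (g i)) (H2 j))
            * finner (expv f) (F j (expv g)))"
proof -
  have "finner (expv f) (delta F H1 H2 n (expv g)) = delta_me F H1 H2 n f g"
    by (rule delta_expv[OF assms])
  also have "\<dots> = (\<Sum>j<n. (hinner (\<lambda>i. \<i> * f i - \<i> * cnj (g i)) (H1 j) + hinner (\<lambda>i. f i + cnj (g i)) (H2 j))
            * finner (expv f) (F j (expv g)))"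
    unfolding delta_me_def
  proof (rule sum.cong[OF refl])
    fix j assume "j \<in> {..<n}"
    then have "F j \<in> Salg" "l2 (H1 j)" "l2 (H2 j)"
      using assms(1) by (auto simp: in_Shd_def)
    then show "A_me (H1 j) (H2 j) (F j) f g - D_me (H1 j) (H2 j) (F j) f g =
      (hinner (\<lambda>i. \<i> * f i - \<i> * cnj (g i)) (H1 j) + hinner (\<lambda>i. f i + cnj (g i)) (H2 j))
        * finner (expv f) (F j (expv g))"
      by (intro A_me_minus_D_me_expv Salg_fock_linear assms(2,3))
  qed
  finally show ?thesis .
qed

end
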